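(* Assume $X_t>0$ and $Y_t>0$ for all $t\in\mathcal T$, let $\alpha=\sum_{t}Y_t/X_t$, and for $\delta\in[0,1]$ and a probability vector $\boldsymbol p$ on $\mathcal T$ let $\mathrm{UB}(\delta,\boldsymbol p)=1-\delta+\frac{\delta^2}{2}\sum_tp_t^2\frac{X_t}{Y_t}$. Then $$\min_{\delta\in[0,1],\ \boldsymbol p\in\Delta(\mathcal T)}\mathrm{UB}(\delta,\boldsymbol p)=L(\alpha),$$ attained at $p_t=\frac{Y_t/X_t}{\alpha}$ and $\delta=\min\{\alpha,1\}$. Consequently, in the weakest-link game, any strategy $F^*_{\mathcal Y}\in\mathbb F(\boldsymbol Y)$ whose $c$-marginals are, for all $c$ and $\boldsymbol u\in\mathbb R^T_{\ge0}$, $F^*_{\mathcal Y,c}(\boldsymbol u)=1-\alpha+\alpha\sum_t\frac{Y_t/X_t}{\alpha}\min\{\frac{u_t}{2v_cX_t},1\}$ if $\alpha\le1$, and $F^*_{\mathcal Y,c}(\boldsymbol u)=\sum_t\frac{Y_t/X_t}{\alpha}\min\{\frac{u_t}{2v_cX_t\alpha},1\}$ if $\alpha>1$, satisfies $\pi_{\mathcal X}(F_{\mathcal X},F^*_{\mathcal Y})\le L(\alpha)$ for all $F_{\mathcal X}\in\mathbb F(\boldsymbol X)$.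
   Context: Contests $\mathcal C=\{1,\dots,C\}$ with values $v_c>0$, $\sum_cv_c=1$; types $\mathcal T=\{1,\dots,T\}$; $\Delta(\mathcal T)$ is the set of probability vectors on $\mathcal T$. $\mathbb F(\boldsymbol X)$ is the set of probability distributions $F$ on $\mathbb R^{CT}_{\ge0}$ (points $\mathbf x=(\boldsymbol x_c)_c$, $\boldsymbol x_c=(x_{c,t})_t$) with $\mathbb E_{\mathbf x\sim F}[\sum_cx_{c,t}]\le X_t$ for all $t$; similarly $\mathbb F(\boldsymbol Y)$. $c$-marginal: $F_c(\boldsymbol u)=\mathbb P_{\mathbf x\sim F}[x_{c,t}\le u_t\ \forall t]$. Weakest-link rule $W_{\mathrm{WL}}(\boldsymbol x,\boldsymbol y)=\mathbf 1\{x_t\ge y_t\ \forall t\}$; $\pi_{\mathcal X}(F_{\mathcal X},F_{\mathcal Y})=\mathbb E[\sum_cv_cW_{\mathrm{WL}}(\boldsymbol x_c,\boldsymbol y_c)]$ with independent $\mathbf x\sim F_{\mathcal X}$, $\mathbf y\sim F_{\mathcal Y}$. $L(\alpha)=1-\alpha/2$ for $\alpha\le1$, $L(\alpha)=1/(2\alpha)$ for $\alpha>1$. *)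

theory Defs
  imports "HOL-Probability.Probability"
begin

text \<open>Contests are the elements of a finite type 'c, types the elements of a finite
  type 't. A point of R^{CT} is a vector x :: real^'t^'c, with x $ c $ t = x_{c,t}.\<close>

definition L :: "real \<Rightarrow> real" where
  "L \<alpha> = (if \<alpha> \<le> 1 then 1 - \<alpha> / 2 else 1 / (2 * \<alpha>))"

definition prob_simplex :: "('t::finite \<Rightarrow> real) set" where
  "prob_simplex = {p. (\<forall>t. 0 \<le> p t) \<and> (\<Sum>t\<in>UNIV. p t) = 1}"

definition UB :: "('t::finite \<Rightarrow> real) \<Rightarrow> ('t \<Rightarrow> real) \<Rightarrow> real \<Rightarrow> ('t \<Rightarrow> real) \<Rightarrow> real" where
  "UB X Y \<delta> p = 1 - \<delta> + \<delta>\<^sup>2 / 2 * (\<Sum>t\<in>UNIV. (p t)\<^sup>2 * X t / Y t)"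

definition strategies :: "('t::finite \<Rightarrow> real) \<Rightarrow> (real^'t^'c::finite) measure set" where
  "strategies X = {F. prob_space F \<and> sets F = sets borel \<and>
      (AE x in F. \<forall>c t. 0 \<le> x $ c $ t) \<and>
      (\<forall>t. (\<integral>\<^sup>+ x. ennreal (\<Sum>c\<in>UNIV. x $ c $ t) \<partial>F) \<le> ennreal (X t))}"

definition marginal :: "(real^'t::finite^'c::finite) measure \<Rightarrow> 'c \<Rightarrow> real^'t \<Rightarrow> real" where
  "marginal F c u = measure F {x \<in> space F. \<forall>t. x $ c $ t \<le> u $ t}"

definition W_WL :: "real^'t::finite \<Rightarrow> real^'t \<Rightarrow> real" where
  "W_WL x y = (if \<forall>t. y $ t \<le> x $ t then 1 else 0)"

definition payoff_X :: "('c::finite \<Rightarrow> real) \<Rightarrow> (real^'t::finite^'c) measure \<Rightarrow> (real^'t^'c) measure \<Rightarrow> real" where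
  "payoff_X v FX FY = (\<integral>z. (\<Sum>c\<in>UNIV. v c * W_WL (fst z $ c) (snd z $ c)) \<partial>(FX \<Otimes>\<^sub>M FY))"

end

theory Submission
  imports Defs
begin

text \<open>Write \<open>w t = Y t / X t\<close>, so that \<open>\<alpha> = (\<Sum>t. w t)\<close>. By Cauchy-Schwarz
  \<open>(\<Sum>t. (p t)\<^sup>2 / w t) \<ge> 1 / \<alpha>\<close> on the simplex, with equality at \<open>p = w / \<alpha>\<close>; hence
  \<open>UB X Y \<delta> p \<ge> 1 - \<delta> + \<delta>\<^sup>2 / (2 * \<alpha>)\<close>, and the minimum of this quadratic over
  \<open>\<delta> \<in> {0..1}\<close> is \<open>L \<alpha>\<close>, attained at \<open>\<delta> = min \<alpha> 1\<close>.

  In the game, \<open>W_WL (x $ c)\<close> is the indicator of a lower orthant, so by Fubini the payoff of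
  \<open>FX\<close> is the expectation of \<open>\<Sum>c. v c * marginal FY c (x $ c)\<close>. Since \<open>min z 1 \<le> z\<close>,
  each term is at most the affine function \<open>v c * (1 - \<delta>) + (\<Sum>t. k t * x $ c $ t)\<close> with
  \<open>k t = \<delta>\<^sup>2 / \<alpha> * p t / (2 * X t)\<close>. Taking expectations and using the budget constraints
  \<open>E[\<Sum>c. x $ c $ t] \<le> X t\<close> bounds the payoff by \<open>1 - \<delta> + \<delta>\<^sup>2 / (2 * \<alpha>) = L \<alpha>\<close>.\<close>

lemma sum_power2_divide_ge_inverse_sum:
  fixes p w :: "'a \<Rightarrow> real"
  assumes "finite A" and w_pos: "\<forall>t\<in>A. 0 < w t" and p_sum: "sum p A = 1"
  shows "1 / sum w A \<le> (\<Sum>t\<in>A. (p t)\<^sup>2 / w t)"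
proof -
  define W where "W = sum w A"
  have "A \<noteq> {}" using p_sum by auto
  then have W_pos: "0 < W" unfolding W_def using assms(1) w_pos by (intro sum_pos) auto
  have "0 \<le> (\<Sum>t\<in>A. (p t - w t / W)\<^sup>2 / w t)"
    using w_pos by (intro sum_nonneg) auto
  also have "\<dots> = (\<Sum>t\<in>A. (p t)\<^sup>2 / w t - 2 * p t / W + w t / W\<^sup>2)"
    using w_pos W_pos by (intro sum.cong) (auto simp: power2_eq_square field_simps)
  also have "\<dots> = (\<Sum>t\<in>A. (p t)\<^sup>2 / w t) - 1 / W"
    using p_sum W_pos
    by (simp add: sum.distrib sum_subtractf sum_divide_distrib[symmetric]
        sum_distrib_left[symmetric] W_def[symmetric] power2_eq_square)
  finally show ?thesis unfolding W_def by simp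
qed

lemma L_le_quadratic:
  assumes "0 < \<alpha>" "0 \<le> \<delta>" "\<delta> \<le> 1"
  shows "L \<alpha> \<le> 1 - \<delta> + \<delta>\<^sup>2 / (2 * \<alpha>)"
proof (cases "\<alpha> \<le> 1")
  case True
  have "1 - \<delta> + \<delta>\<^sup>2 / (2 * \<alpha>) - (1 - \<alpha> / 2) = (\<delta> - \<alpha>)\<^sup>2 / (2 * \<alpha>)"
    using assms(1) by (simp add: power2_eq_square field_simps)
  moreover have "0 \<le> (\<delta> - \<alpha>)\<^sup>2 / (2 * \<alpha>)"
    using assms(1) by simp
  ultimately show ?thesis using True by (simp add: L_def)
next
  case False
  have "1 - \<delta> + \<delta>\<^sup>2 / (2 * \<alpha>) - 1 / (2 * \<alpha>) = (1 - \<delta>) * (2 * \<alpha> - 1 - \<delta>) / (2 * \<alpha>)"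
    using False by (simp add: power2_eq_square field_simps)
  moreover have "0 \<le> (1 - \<delta>) * (2 * \<alpha> - 1 - \<delta>) / (2 * \<alpha>)"
    using False assms by simp
  ultimately show ?thesis using False by (simp add: L_def)
qed

lemma L_eq_quadratic_at_min:
  assumes "0 < \<alpha>"
  shows "L \<alpha> = 1 - min \<alpha> 1 + (min \<alpha> 1)\<^sup>2 / (2 * \<alpha>)"
  using assms by (auto simp: L_def min_def power2_eq_square field_simps)

lemma borel_measurable_vec_nth[measurable (raw)]:
  fixes f :: "'a \<Rightarrow> 'b::topological_space^'n::finite"
  assumes "f \<in> borel_measurable M"
  shows "(\<lambda>x. f x $ i) \<in> borel_measurable M"
  by (rule measurable_compose[OF assms borel_measurable_continuous_onI]) (intro continuous_intros)

lemma borel_measurable_W_WL[measurable]: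
  assumes [measurable]: "f \<in> borel_measurable M" "g \<in> borel_measurable M"
  shows "(\<lambda>x. W_WL (f x) (g x)) \<in> borel_measurable M"
proof -
  have W_WL_eq: "(\<lambda>x. W_WL (f x) (g x)) = (\<lambda>x. if \<forall>t\<in>UNIV. g x $ t \<le> f x $ t then 1 else 0)"
    by (simp add: W_WL_def)
  show ?thesis unfolding W_WL_eq by measurable
qed

lemma integral_W_WL_eq_marginal: "(\<integral>y. W_WL u (y $ c) \<partial>F) = marginal F c u"
proof -
  have "(\<lambda>y. W_WL u (y $ c)) = indicator {y. \<forall>t. y $ c $ t \<le> u $ t}"
    by (auto simp: W_WL_def indicator_def)
  then show ?thesis
    unfolding marginal_def by (simp add: Collect_conj_eq Int_commute)
qed

lemma payoff_X_eq_expected_marginals: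
  fixes FX FY :: "(real^'t::finite^'c::finite) measure"
  assumes "prob_space FX" "prob_space FY"
    and sets_FX: "sets FX = sets borel" and sets_FY: "sets FY = sets borel"
  shows "payoff_X v FX FY = (\<integral>x. (\<Sum>c\<in>UNIV. v c * marginal FY c (x $ c)) \<partial>FX)"
proof -
  interpret FX: prob_space FX by fact
  interpret FY: prob_space FY by fact
  interpret pair_prob_space FX FY ..
  define f where "f z = (\<Sum>c\<in>UNIV. v c * W_WL (fst z $ c) (snd z $ c))"
    for z :: "(real^'t^'c) \<times> (real^'t^'c)"
  have sets_P: "sets (FX \<Otimes>\<^sub>M FY) = sets (borel \<Otimes>\<^sub>M borel)"
    by (rule sets_pair_measure_cong[OF sets_FX sets_FY])
  have "f \<in> borel_measurable (FX \<Otimes>\<^sub>M FY)"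
    unfolding f_def measurable_cong_sets[OF sets_P refl] by measurable
  moreover have "norm (f z) \<le> (\<Sum>c\<in>UNIV. \<bar>v c\<bar>)" for z
    unfolding f_def by (auto intro!: order.trans[OF sum_abs] sum_mono simp: W_WL_def)
  ultimately have "integrable (FX \<Otimes>\<^sub>M FY) f"
    by (intro P.integrable_const_bound[where B="\<Sum>c\<in>UNIV. \<bar>v c\<bar>"]) auto
  have "payoff_X v FX FY = integral\<^sup>L (FX \<Otimes>\<^sub>M FY) f"
    unfolding payoff_X_def f_def ..
  also have "\<dots> = (\<integral>x. (\<integral>y. f (x, y) \<partial>FY) \<partial>FX)"
    by (rule integral_fst'[symmetric]) fact
  also have "(\<lambda>x. \<integral>y. f (x, y) \<partial>FY) = (\<lambda>x. \<Sum>c\<in>UNIV. v c * marginal FY c (x $ c))"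
  proof
    fix x :: "real^'t^'c"
    have "integrable FY (\<lambda>y. W_WL (x $ c) (y $ c))" for c
      by (intro FY.integrable_const_bound[where B=1])
        (auto simp: W_WL_def measurable_cong_sets[OF sets_FY refl])
    then show "(\<integral>y. f (x, y) \<partial>FY) = (\<Sum>c\<in>UNIV. v c * marginal FY c (x $ c))"
      unfolding f_def by (simp add: integral_W_WL_eq_marginal)
  qed
  finally show ?thesis .
qed

lemma strategies_allocation_integrable:
  assumes F: "F \<in> strategies X" and X_nonneg: "0 \<le> X t"
  shows "integrable F (\<lambda>x. \<Sum>c\<in>UNIV. x $ c $ t)"
    and "(\<integral>x. (\<Sum>c\<in>UNIV. x $ c $ t) \<partial>F) \<le> X t"
proof -
  have sets_F: "sets F = sets borel"
    and AE_nonneg: "AE x in F. 0 \<le> (\<Sum>c\<in>UNIV. x $ c $ t)"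
    and budget: "(\<integral>\<^sup>+ x. ennreal (\<Sum>c\<in>UNIV. x $ c $ t) \<partial>F) \<le> ennreal (X t)"
    using F unfolding strategies_def by (auto elim!: AE_mp intro!: sum_nonneg)
  have meas: "(\<lambda>x. \<Sum>c\<in>UNIV. x $ c $ t) \<in> borel_measurable F"
    unfolding measurable_cong_sets[OF sets_F refl] by measurable
  show "integrable F (\<lambda>x. \<Sum>c\<in>UNIV. x $ c $ t)"
    using budget by (intro integrableI_nonneg[OF meas AE_nonneg])
      (simp add: top.not_eq_extremum order.strict_trans1)
  show "(\<integral>x. (\<Sum>c\<in>UNIV. x $ c $ t) \<partial>F) \<le> X t"
    unfolding integral_eq_nn_integral[OF meas AE_nonneg] using X_nonneg budget by (rule enn2real_leI)
qed

lemma sum_marginals_le_affine_allocation: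
  fixes x :: "real^'t::finite^'c::finite"
  assumes v_sum: "(\<Sum>c\<in>UNIV. v c) = 1"
    and marginal_le: "\<forall>c u. (\<forall>t. 0 \<le> u $ t) \<longrightarrow>
      v c * marginal FY c u \<le> v c * K + (\<Sum>t\<in>UNIV. k t * u $ t)"
    and x_nonneg: "\<forall>c t. 0 \<le> x $ c $ t"
  shows "(\<Sum>c\<in>UNIV. v c * marginal FY c (x $ c)) \<le> K + (\<Sum>t\<in>UNIV. k t * (\<Sum>c\<in>UNIV. x $ c $ t))"
proof -
  have "(\<Sum>c\<in>UNIV. v c * marginal FY c (x $ c))
      \<le> (\<Sum>c\<in>UNIV. v c * K + (\<Sum>t\<in>UNIV. k t * x $ c $ t))"
    using marginal_le x_nonneg by (intro sum_mono) auto
  also have "\<dots> = (\<Sum>c\<in>UNIV. v c) * K + (\<Sum>c\<in>UNIV. \<Sum>t\<in>UNIV. k t * x $ c $ t)"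
    by (simp only: sum.distrib sum_distrib_right)
  also have "(\<Sum>c\<in>UNIV. \<Sum>t\<in>UNIV. k t * x $ c $ t) = (\<Sum>t\<in>UNIV. \<Sum>c\<in>UNIV. k t * x $ c $ t)"
    by (rule sum.swap)
  also have "\<dots> = (\<Sum>t\<in>UNIV. k t * (\<Sum>c\<in>UNIV. x $ c $ t))"
    by (simp only: sum_distrib_left)
  finally show ?thesis
    using v_sum by simp
qed

lemma payoff_X_le_affine_budget:
  fixes FX FY :: "(real^'t::finite^'c::finite) measure" and K :: real and k :: "'t \<Rightarrow> real"
  assumes FX: "FX \<in> strategies X" and FY_prob: "prob_space FY" and sets_FY: "sets FY = sets borel"
    and X_nonneg: "\<forall>t. 0 \<le> X t" and v_sum: "(\<Sum>c\<in>UNIV. v c) = 1"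
    and K_nonneg: "0 \<le> K" and k_nonneg: "\<forall>t. 0 \<le> k t"
    and marginal_le: "\<forall>c u. (\<forall>t. 0 \<le> u $ t) \<longrightarrow>
      v c * marginal FY c u \<le> v c * K + (\<Sum>t\<in>UNIV. k t * u $ t)"
  shows "payoff_X v FX FY \<le> K + (\<Sum>t\<in>UNIV. k t * X t)"
proof -
  interpret prob_space FX
    using FX by (simp add: strategies_def)
  have AE_nonneg: "AE x in FX. \<forall>c t. 0 \<le> x $ c $ t"
    using FX by (simp add: strategies_def)
  have integrable_alloc: "integrable FX (\<lambda>x. \<Sum>c\<in>UNIV. x $ c $ t)" for t
    using strategies_allocation_integrable(1)[OF FX] X_nonneg by blast
  have "payoff_X v FX FY = (\<integral>x. (\<Sum>c\<in>UNIV. v c * marginal FY c (x $ c)) \<partial>FX)"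
    using FX FY_prob sets_FY by (intro payoff_X_eq_expected_marginals) (auto simp: strategies_def)
  also have "\<dots> \<le> (\<integral>x. K + (\<Sum>t\<in>UNIV. k t * (\<Sum>c\<in>UNIV. x $ c $ t)) \<partial>FX)"
  proof (rule integral_mono_AE')
    show "integrable FX (\<lambda>x. K + (\<Sum>t\<in>UNIV. k t * (\<Sum>c\<in>UNIV. x $ c $ t)))"
      using integrable_alloc by auto
    show "AE x in FX. (\<Sum>c\<in>UNIV. v c * marginal FY c (x $ c))
        \<le> K + (\<Sum>t\<in>UNIV. k t * (\<Sum>c\<in>UNIV. x $ c $ t))"
      using AE_nonneg by eventually_elim (rule sum_marginals_le_affine_allocation[OF v_sum marginal_le])
    show "AE x in FX. 0 \<le> K + (\<Sum>t\<in>UNIV. k t * (\<Sum>c\<in>UNIV. x $ c $ t))"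
      using AE_nonneg by eventually_elim
        (use K_nonneg k_nonneg in \<open>auto intro!: add_nonneg_nonneg sum_nonneg mult_nonneg_nonneg\<close>)
  qed
  also have "\<dots> = K + (\<Sum>t\<in>UNIV. k t * (\<integral>x. (\<Sum>c\<in>UNIV. x $ c $ t) \<partial>FX))"
    using integrable_alloc by (simp add: Bochner_Integration.integral_sum prob_space)
  also have "\<dots> \<le> K + (\<Sum>t\<in>UNIV. k t * X t)"
    using strategies_allocation_integrable(2)[OF FX] X_nonneg k_nonneg
    by (intro add_left_mono sum_mono mult_left_mono) auto
  finally show ?thesis .
qed

lemma mult_min_divide_le:
  fixes a w u b :: real
  assumes "0 \<le> a" "0 < w"
  shows "w * (a * min (u / (w * b)) 1) \<le> a * u / b"
proof -
  have "w * (a * min (u / (w * b)) 1) \<le> w * (a * (u / (w * b)))"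
    using assms by (intro mult_left_mono) auto
  also have "\<dots> = a * u / b"
    using assms(2) by simp
  finally show ?thesis .
qed

lemma weakest_link_marginal_le_affine:
  fixes p X :: "'t::finite \<Rightarrow> real" and u :: "real^'t"
  assumes "0 < w" "0 < \<alpha>" "\<forall>t. 0 \<le> p t"
  shows "w * (if \<alpha> \<le> 1
             then 1 - \<alpha> + \<alpha> * (\<Sum>t\<in>UNIV. p t * min (u $ t / (2 * w * X t)) 1)
             else (\<Sum>t\<in>UNIV. p t * min (u $ t / (2 * w * X t * \<alpha>)) 1))
    \<le> w * (1 - min \<alpha> 1) + (\<Sum>t\<in>UNIV. (min \<alpha> 1)\<^sup>2 / \<alpha> * p t / (2 * X t) * u $ t)"
proof (cases "\<alpha> \<le> 1")
  case True
  have "w * (\<alpha> * (p t * min (u $ t / (2 * w * X t)) 1))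
      \<le> (min \<alpha> 1)\<^sup>2 / \<alpha> * p t / (2 * X t) * u $ t" for t
  proof -
    have "w * (p t * min (u $ t / (w * (2 * X t))) 1) \<le> p t * u $ t / (2 * X t)"
      using assms by (intro mult_min_divide_le) auto
    then have "\<alpha> * (w * (p t * min (u $ t / (w * (2 * X t))) 1)) \<le> \<alpha> * (p t * u $ t / (2 * X t))"
      using assms by (intro mult_left_mono) auto
    then show ?thesis
      using True assms by (simp add: power2_eq_square mult_ac)
  qed
  then show ?thesis
    using True by (simp add: distrib_left sum_distrib_left sum_mono)
next
  case False
  have "w * (p t * min (u $ t / (2 * w * X t * \<alpha>)) 1)
      \<le> (min \<alpha> 1)\<^sup>2 / \<alpha> * p t / (2 * X t) * u $ t" for t
  proof -
    have "w * (p t * min (u $ t / (w * (2 * X t * \<alpha>))) 1) \<le> p t * u $ t / (2 * X t * \<alpha>)"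
      using assms by (intro mult_min_divide_le) auto
    then show ?thesis
      using False by (simp add: mult_ac)
  qed
  then show ?thesis
    using False by (simp add: sum_distrib_left sum_mono)
qed

context
  fixes X Y :: "'t::finite \<Rightarrow> real" and \<alpha> :: real
  assumes X_pos: "\<forall>t. 0 < X t" and Y_pos: "\<forall>t. 0 < Y t"
    and alpha_def: "\<alpha> = (\<Sum>t\<in>UNIV. Y t / X t)"
begin

lemma alpha_pos: "0 < \<alpha>"
  unfolding alpha_def using X_pos Y_pos by (intro sum_pos) auto

lemma UB_alt_def: "UB X Y \<delta> p = 1 - \<delta> + \<delta>\<^sup>2 / 2 * (\<Sum>t\<in>UNIV. (p t)\<^sup>2 / (Y t / X t))"
  unfolding UB_def by simp

lemma L_le_UB:
  assumes "\<delta> \<in> {0..1}" and "p \<in> prob_simplex"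
  shows "L \<alpha> \<le> UB X Y \<delta> p"
proof -
  have "1 / \<alpha> \<le> (\<Sum>t\<in>UNIV. (p t)\<^sup>2 / (Y t / X t))"
    unfolding alpha_def using assms(2) X_pos Y_pos
    by (intro sum_power2_divide_ge_inverse_sum) (auto simp: prob_simplex_def)
  then have "\<delta>\<^sup>2 / (2 * \<alpha>) \<le> \<delta>\<^sup>2 / 2 * (\<Sum>t\<in>UNIV. (p t)\<^sup>2 / (Y t / X t))"
    using mult_left_mono[of _ _ "\<delta>\<^sup>2 / 2"] by fastforce
  then show ?thesis
    using L_le_quadratic[OF alpha_pos, of \<delta>] assms(1) unfolding UB_alt_def by auto
qed

lemma sum_optimal_weights: "(\<Sum>t\<in>UNIV. (Y t / X t) / \<alpha>) = 1"
  unfolding sum_divide_distrib[symmetric] alpha_def[symmetric] using alpha_pos by simp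

lemma optimal_weights_in_prob_simplex: "(\<lambda>t. (Y t / X t) / \<alpha>) \<in> prob_simplex"
  using sum_optimal_weights alpha_pos X_pos Y_pos by (simp add: prob_simplex_def less_imp_le)

lemma UB_optimal_eq_L: "UB X Y (min \<alpha> 1) (\<lambda>t. (Y t / X t) / \<alpha>) = L \<alpha>"
proof -
  have "(\<Sum>t\<in>UNIV. ((Y t / X t) / \<alpha>)\<^sup>2 / (Y t / X t)) = (\<Sum>t\<in>UNIV. Y t / X t) / \<alpha>\<^sup>2"
    unfolding sum_divide_distrib using X_pos Y_pos
    by (intro sum.cong) (auto simp: power2_eq_square field_simps)
  then show ?thesis
    using alpha_pos unfolding UB_alt_def L_eq_quadratic_at_min[OF alpha_pos] alpha_def[symmetric]
    by (simp add: power2_eq_square)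
qed

lemma affine_budget_eq_L:
  "1 - min \<alpha> 1 + (\<Sum>t\<in>UNIV. (min \<alpha> 1)\<^sup>2 / \<alpha> * ((Y t / X t) / \<alpha>) / (2 * X t) * X t) = L \<alpha>"
proof -
  have "(\<Sum>t\<in>UNIV. (min \<alpha> 1)\<^sup>2 / \<alpha> * ((Y t / X t) / \<alpha>) / (2 * X t) * X t)
      = (\<Sum>t\<in>UNIV. (min \<alpha> 1)\<^sup>2 / (2 * \<alpha>) * ((Y t / X t) / \<alpha>))"
    using X_pos by (intro sum.cong) auto
  also have "\<dots> = (min \<alpha> 1)\<^sup>2 / (2 * \<alpha>)"
    by (simp only: sum_distrib_left[symmetric] sum_optimal_weights mult_1_right)
  finally show ?thesis
    using L_eq_quadratic_at_min[OF alpha_pos] by simp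
qed

lemma payoff_X_le_L_weakest_link_marginals:
  fixes v :: "'c::finite \<Rightarrow> real" and FX FY :: "(real^'t^'c) measure"
  assumes v_pos: "\<forall>c. 0 < v c" and v_sum: "(\<Sum>c\<in>UNIV. v c) = 1"
    and FY: "FY \<in> strategies Y" and FX: "FX \<in> strategies X"
    and marginal_FY: "\<forall>c. \<forall>u::real^'t. (\<forall>t. 0 \<le> u $ t) \<longrightarrow>
            marginal FY c u =
              (if \<alpha> \<le> 1
               then 1 - \<alpha> + \<alpha> * (\<Sum>t\<in>UNIV. (Y t / X t) / \<alpha> * min (u $ t / (2 * v c * X t)) 1)
               else (\<Sum>t\<in>UNIV. (Y t / X t) / \<alpha> * min (u $ t / (2 * v c * X t * \<alpha>)) 1))"
  shows "payoff_X v FX FY \<le> L \<alpha>"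
proof -
  define k where "k t = (min \<alpha> 1)\<^sup>2 / \<alpha> * ((Y t / X t) / \<alpha>) / (2 * X t)" for t
  have "v c * marginal FY c u \<le> v c * (1 - min \<alpha> 1) + (\<Sum>t\<in>UNIV. k t * u $ t)"
    if "\<forall>t. 0 \<le> u $ t" for c u
    using weakest_link_marginal_le_affine[of "v c" \<alpha> "\<lambda>t. (Y t / X t) / \<alpha>" u X]
      marginal_FY that v_pos alpha_pos X_pos Y_pos
    by (simp add: k_def less_imp_le)
  then have "payoff_X v FX FY \<le> 1 - min \<alpha> 1 + (\<Sum>t\<in>UNIV. k t * X t)"
    using FX FY X_pos Y_pos alpha_pos v_sum
    by (intro payoff_X_le_affine_budget) (auto simp: strategies_def k_def less_imp_le)
  then show ?thesis
    using affine_budget_eq_L by (simp add: k_def)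
qed

end

theorem lemma4:
  fixes v :: "'c::finite \<Rightarrow> real" and X Y :: "'t::finite \<Rightarrow> real" and \<alpha> :: real
  assumes v_pos: "\<forall>c. 0 < v c" and v_sum: "(\<Sum>c\<in>UNIV. v c) = 1"
    and X_pos: "\<forall>t. 0 < X t" and Y_pos: "\<forall>t. 0 < Y t"
    and alpha_def: "\<alpha> = (\<Sum>t\<in>UNIV. Y t / X t)"
  shows "(\<forall>\<delta>\<in>{0..1}. \<forall>p\<in>prob_simplex. L \<alpha> \<le> UB X Y \<delta> p)
    \<and> (\<lambda>t. (Y t / X t) / \<alpha>) \<in> prob_simplex \<and> min \<alpha> 1 \<in> {0..1}
    \<and> UB X Y (min \<alpha> 1) (\<lambda>t. (Y t / X t) / \<alpha>) = L \<alpha>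
    \<and> (\<forall>FY \<in> strategies Y.
         (\<forall>c. \<forall>u::real^'t. (\<forall>t. 0 \<le> u $ t) \<longrightarrow>
            marginal FY c u =
              (if \<alpha> \<le> 1
               then 1 - \<alpha> + \<alpha> * (\<Sum>t\<in>UNIV. (Y t / X t) / \<alpha> * min (u $ t / (2 * v c * X t)) 1)
               else (\<Sum>t\<in>UNIV. (Y t / X t) / \<alpha> * min (u $ t / (2 * v c * X t * \<alpha>)) 1)))
         \<longrightarrow> (\<forall>FX \<in> (strategies X :: (real^'t^'c) measure set). payoff_X v FX FY \<le> L \<alpha>))"
  using L_le_UB[OF X_pos Y_pos alpha_def] optimal_weights_in_prob_simplex[OF X_pos Y_pos alpha_def]
    UB_optimal_eq_L[OF X_pos Y_pos alpha_def] alpha_pos[OF X_pos Y_pos alpha_def]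
    payoff_X_le_L_weakest_link_marginals[OF X_pos Y_pos alpha_def v_pos v_sum]
  by auto

end
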